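(* Let $P$ be the uniform distribution on $[0,1]$ and $\beta=\{\frac14,\frac12\}$. The conditional optimal set of four-points for $P$ with respect to $\beta$ is $\alpha_4=\{\frac1{12},\frac14,\frac12,\frac56\}$, with $V_4=\frac{5}{768}$ ($\approx0.00651042$).
   Context: For a Borel probability measure $P$ on $\mathbb{R}$ and finite $\beta$ with $\mathrm{card}(\beta)=r$, for $n\ge r$, $V_n=\inf\{\int\min_{a\in\alpha\cup\beta}(x-a)^2dP(x):\mathrm{card}(\alpha)\le n-r\}$; a set $\alpha\cup\beta$ attaining the infimum, with each point of $\beta$ having a Voronoi region of positive $P$-measure, is a conditional optimal set of $n$-points with respect to $\beta$. *)

theory Defs
  imports "HOL-Probability.Probability"
begin

definition distortion :: "real measure \<Rightarrow> real set \<Rightarrow> real" where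
  "distortion P S = (\<integral>x. Min ((\<lambda>a. (x - a)\<^sup>2) ` S) \<partial>P)"

definition cond_error :: "real measure \<Rightarrow> real set \<Rightarrow> nat \<Rightarrow> real" where
  "cond_error P \<beta> n =
     Inf {distortion P (\<alpha> \<union> \<beta>) | \<alpha>. finite \<alpha> \<and> card \<alpha> \<le> n - card \<beta>}"

definition voronoi :: "real set \<Rightarrow> real \<Rightarrow> real set" where
  "voronoi S a = {x. \<forall>b\<in>S. \<bar>x - a\<bar> \<le> \<bar>x - b\<bar>}"

definition cond_optimal :: "real measure \<Rightarrow> real set \<Rightarrow> nat \<Rightarrow> real set \<Rightarrow> bool" where
  "cond_optimal P \<beta> n S \<longleftrightarrow>
     (\<exists>\<alpha>. finite \<alpha> \<and> card \<alpha> \<le> n - card \<beta> \<and> S = \<alpha> \<union> \<beta>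
        \<and> distortion P S = cond_error P \<beta> n
        \<and> (\<forall>b\<in>\<beta>. measure P (voronoi S b) > 0))"

end

(*
  Write the error of {a, b, 1/4, 1/2} as the integral over [0, 1] of the squared distance to the
  nearest point, and split [0, 1] at 1/4 and 1/2.  On a piece [u, v], a point outside the piece
  may be moved to the nearest endpoint, so the error on the piece is at least (v - u)^3/3 if the
  set contains one endpoint and lies beyond it, (v - u)^3/12 if it contains both endpoints and
  nothing strictly between them, and (v - u)^3/27 if it contains one endpoint and, apart from points
  beyond that endpoint, a single point p; equality in the last case forces p to lie at distance
  (v - u)/3 from the other endpoint.  For a < 1/4 and b > 1/2 these bounds add up to
  1/1728 + 1/768 + 1/216 = 5/768, with equality only for a = 1/12 and b = 5/6; every other
  placement of a and b leaves a strictly larger error.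
*)
theory Submission
  imports Defs
begin

definition min_sq_dist :: "real set \<Rightarrow> real \<Rightarrow> real" where
  "min_sq_dist S x = Min ((\<lambda>a. (x - a)\<^sup>2) ` S)"

lemma min_sq_dist_singleton [simp]: "min_sq_dist {p} x = (x - p)\<^sup>2"
  by (simp add: min_sq_dist_def)

lemma min_sq_dist_insert:
  "finite S \<Longrightarrow> S \<noteq> {} \<Longrightarrow> min_sq_dist (insert p S) x = min ((x - p)\<^sup>2) (min_sq_dist S x)"
  by (simp add: min_sq_dist_def)

lemma continuous_on_min_sq_dist:
  assumes "finite S" "S \<noteq> {}"
  shows "continuous_on A (min_sq_dist S)"
  using assms
proof (induction S rule: finite_ne_induct)
  case (insert p S)
  then have "min_sq_dist (insert p S) = (\<lambda>x. min ((x - p)\<^sup>2) (min_sq_dist S x))"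
    by (simp add: fun_eq_iff min_sq_dist_insert)
  with insert show ?case by (simp add: continuous_intros)
qed (simp add: continuous_intros)

lemma min_sq_dist_nonneg: "finite S \<Longrightarrow> S \<noteq> {} \<Longrightarrow> 0 \<le> min_sq_dist S x"
  unfolding min_sq_dist_def by (rule Min.boundedI) auto

lemma min_sq_dist_eq_0_iff:
  "finite S \<Longrightarrow> S \<noteq> {} \<Longrightarrow> min_sq_dist S x = 0 \<longleftrightarrow> x \<in> S"
  unfolding min_sq_dist_def by (subst Min_eq_iff) auto

lemma min_sq_dist_antimono:
  "S \<subseteq> T \<Longrightarrow> S \<noteq> {} \<Longrightarrow> finite T \<Longrightarrow> min_sq_dist T x \<le> min_sq_dist S x"
  unfolding min_sq_dist_def by (rule Min_antimono) auto

lemma min_sq_dist_le_if_closer: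
  assumes "finite S" "S \<noteq> {}" "finite T" "T \<noteq> {}"
    and closer: "\<And>s. s \<in> S \<Longrightarrow> \<exists>t\<in>T. \<bar>x - t\<bar> \<le> \<bar>x - s\<bar>"
  shows "min_sq_dist T x \<le> min_sq_dist S x"
proof -
  have "min_sq_dist S x \<in> (\<lambda>a. (x - a)\<^sup>2) ` S"
    unfolding min_sq_dist_def using assms(1,2) by (intro Min_in) auto
  then obtain s where "s \<in> S" and s: "min_sq_dist S x = (x - s)\<^sup>2" by blast
  then obtain t where "t \<in> T" "\<bar>x - t\<bar> \<le> \<bar>x - s\<bar>" using closer by blast
  then have "min_sq_dist T x \<le> (x - t)\<^sup>2"
    unfolding min_sq_dist_def using assms(3) by (intro Min_le) auto
  also have "\<dots> \<le> (x - s)\<^sup>2"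
    using \<open>\<bar>x - t\<bar> \<le> \<bar>x - s\<bar>\<close> by (simp add: abs_le_square_iff)
  finally show ?thesis using s by simp
qed

lemma integrable_min_sq_dist:
  "finite S \<Longrightarrow> S \<noteq> {} \<Longrightarrow> min_sq_dist S integrable_on {u..v}"
  by (intro integrable_continuous_interval continuous_on_min_sq_dist)

lemma integral_min_sq_dist_le_if_closer:
  assumes "finite S" "S \<noteq> {}" "finite T" "T \<noteq> {}"
    and "\<And>x s. x \<in> {u..v} \<Longrightarrow> s \<in> S \<Longrightarrow> \<exists>t\<in>T. \<bar>x - t\<bar> \<le> \<bar>x - s\<bar>"
  shows "integral {u..v} (min_sq_dist T) \<le> integral {u..v} (min_sq_dist S)"
  using assms by (intro integral_le integrable_min_sq_dist min_sq_dist_le_if_closer) auto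

lemma integral_min_sq_dist_pos:
  assumes "finite S" "S \<noteq> {}" "u < v"
  shows "0 < integral {u..v} (min_sq_dist S)"
proof -
  have "0 \<le> integral {u..v} (min_sq_dist S)"
    using assms by (intro integral_nonneg integrable_min_sq_dist min_sq_dist_nonneg)
  moreover have "integral {u..v} (min_sq_dist S) \<noteq> 0"
  proof
    assume "integral {u..v} (min_sq_dist S) = 0"
    then have "(min_sq_dist S has_integral 0) (cbox u v)"
      using integrable_min_sq_dist[OF assms(1,2)] by (metis box_real(2) has_integral_integral)
    then have "min_sq_dist S x = 0" if "x \<in> {u..v}" for x
      using that assms
      by (intro has_integral_0_cbox_imp_0[of u v]) (auto intro: continuous_on_min_sq_dist min_sq_dist_nonneg)
    then have "{u..v} \<subseteq> S" using min_sq_dist_eq_0_iff[OF assms(1,2)] by blast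
    then show False using assms by (meson finite_subset infinite_Icc)
  qed
  ultimately show ?thesis by linarith
qed

lemma distortion_uniform_measure:
  assumes "finite S" "S \<noteq> {}" "u < v"
  shows "distortion (uniform_measure lborel {u..v}) S = integral {u..v} (min_sq_dist S) / (v - u)"
proof -
  have meas: "min_sq_dist S \<in> borel_measurable lborel"
    using assms by (simp add: borel_measurable_continuous_onI continuous_on_min_sq_dist)
  have "uniform_measure lborel {u..v} = density lborel (\<lambda>x. ennreal (indicator {u..v} x / (v - u)))"
    using assms(3) unfolding uniform_measure_def
    by (simp add: ennreal_indicator divide_ennreal[symmetric])
  then have "distortion (uniform_measure lborel {u..v}) S
      = (\<integral>x. (indicator {u..v} x / (v - u)) *\<^sub>R min_sq_dist S x \<partial>lborel)"
    unfolding distortion_def min_sq_dist_def[symmetric]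
    using assms(3) meas by (simp add: integral_density)
  also have "\<dots> = (\<integral>x. indicator {u..v} x *\<^sub>R min_sq_dist S x \<partial>lborel) / (v - u)"
    by (simp add: mult.commute)
  also have "(\<integral>x. indicator {u..v} x *\<^sub>R min_sq_dist S x \<partial>lborel) = integral {u..v} (min_sq_dist S)"
    unfolding set_lebesgue_integral_def[symmetric] using assms
    by (intro set_borel_integral_eq_integral borel_integrable_atLeastAtMost' continuous_on_min_sq_dist)
  finally show ?thesis .
qed

lemma has_integral_sq_dist:
  fixes p u v :: real
  assumes "u \<le> v"
  shows "((\<lambda>x. (x - p)\<^sup>2) has_integral ((v - p) ^ 3 - (u - p) ^ 3) / 3) {u..v}"
proof -
  have "((\<lambda>x. (x - p) ^ 3 / 3) has_real_derivative (x - p)\<^sup>2) (at x within {u..v})" for x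
    by (auto intro!: derivative_eq_intros simp: power2_eq_square)
  then show ?thesis
    using fundamental_theorem_of_calculus[OF assms, of "\<lambda>x. (x - p) ^ 3 / 3"]
    by (simp add: has_real_derivative_iff_has_vector_derivative diff_divide_distrib)
qed

lemma has_integral_min_sq_dist_pair:
  fixes p q u v :: real
  assumes "p \<le> q" "u \<le> (p + q) / 2" "(p + q) / 2 \<le> v"
  shows "(min_sq_dist {p, q} has_integral (p - u) ^ 3 / 3 + (q - p) ^ 3 / 12 + (v - q) ^ 3 / 3) {u..v}"
proof -
  let ?m = "(p + q) / 2"
  have "(min_sq_dist {p, q} has_integral ((?m - p) ^ 3 - (u - p) ^ 3) / 3) {u..?m}"
  proof (rule has_integral_eq[OF _ has_integral_sq_dist[OF assms(2)]])
    fix x assume "x \<in> {u..?m}"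
    then have "(x - p)\<^sup>2 \<le> (x - q)\<^sup>2"
      using assms(1) by (subst abs_le_square_iff[symmetric]) auto
    then show "(x - p)\<^sup>2 = min_sq_dist {p, q} x" by (simp add: min_sq_dist_insert)
  qed
  moreover have "(min_sq_dist {p, q} has_integral ((v - q) ^ 3 - (?m - q) ^ 3) / 3) {?m..v}"
  proof (rule has_integral_eq[OF _ has_integral_sq_dist[OF assms(3)]])
    fix x assume "x \<in> {?m..v}"
    then have "(x - q)\<^sup>2 \<le> (x - p)\<^sup>2"
      using assms(1) by (subst abs_le_square_iff[symmetric]) auto
    then show "(x - q)\<^sup>2 = min_sq_dist {p, q} x" by (simp add: min_sq_dist_insert)
  qed
  ultimately have "(min_sq_dist {p, q} has_integral
      ((?m - p) ^ 3 - (u - p) ^ 3) / 3 + ((v - q) ^ 3 - (?m - q) ^ 3) / 3) {u..v}"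
    by (rule has_integral_combine[OF assms(2,3)])
  moreover have "((?m - p) ^ 3 - (u - p) ^ 3) / 3 + ((v - q) ^ 3 - (?m - q) ^ 3) / 3
      = (p - u) ^ 3 / 3 + (q - p) ^ 3 / 12 + (v - q) ^ 3 / 3"
    by (simp add: field_simps power3_eq_cube)
  ultimately show ?thesis by simp
qed

lemma cube_sum_ge:
  fixes s t :: real
  assumes "0 \<le> s" "0 \<le> t"
  shows "(s + t) ^ 3 / 27 \<le> s ^ 3 / 3 + t ^ 3 / 12"
    and "s ^ 3 / 3 + t ^ 3 / 12 = (s + t) ^ 3 / 27 \<Longrightarrow> t = 2 * s"
proof -
  have eq: "s ^ 3 / 3 + t ^ 3 / 12 = (s + t) ^ 3 / 27 + (t - 2 * s)\<^sup>2 * (8 * s + 5 * t) / 108"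
    by (simp add: field_simps power2_eq_square power3_eq_cube)
  have "0 \<le> (t - 2 * s)\<^sup>2 * (8 * s + 5 * t)" using assms by simp
  then show "(s + t) ^ 3 / 27 \<le> s ^ 3 / 3 + t ^ 3 / 12" unfolding eq by simp
  assume "s ^ 3 / 3 + t ^ 3 / 12 = (s + t) ^ 3 / 27"
  then have "(t - 2 * s)\<^sup>2 * (8 * s + 5 * t) = 0" unfolding eq by simp
  moreover have "8 * s + 5 * t \<noteq> 0 \<or> t = 2 * s" using assms by linarith
  ultimately show "t = 2 * s" by auto
qed

lemma integral_min_sq_dist_ge_of_right_end:
  assumes "finite S" "v \<in> S" "\<And>s. s \<in> S \<Longrightarrow> v \<le> s" "u \<le> v"
  shows "(v - u) ^ 3 / 3 \<le> integral {u..v} (min_sq_dist S)"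
proof -
  have "integral {u..v} (min_sq_dist {v}) \<le> integral {u..v} (min_sq_dist S)"
    using assms by (intro integral_min_sq_dist_le_if_closer) (auto dest: assms(3))
  moreover have "integral {u..v} (min_sq_dist {v}) = (v - u) ^ 3 / 3"
    using has_integral_min_sq_dist_pair[of v v u v] assms(4) by (simp add: integral_unique)
  ultimately show ?thesis by simp
qed

lemma integral_min_sq_dist_ge_of_left_end:
  assumes "finite S" "u \<in> S" "\<And>s. s \<in> S \<Longrightarrow> s \<le> u" "u \<le> v"
  shows "(v - u) ^ 3 / 3 \<le> integral {u..v} (min_sq_dist S)"
proof -
  have "integral {u..v} (min_sq_dist {u}) \<le> integral {u..v} (min_sq_dist S)"
    using assms by (intro integral_min_sq_dist_le_if_closer) (auto dest: assms(3))
  moreover have "integral {u..v} (min_sq_dist {u}) = (v - u) ^ 3 / 3"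
    using has_integral_min_sq_dist_pair[of u u u v] assms(4) by (simp add: integral_unique)
  ultimately show ?thesis by simp
qed

lemma integral_min_sq_dist_ge_of_ends:
  assumes "finite S" "u \<in> S" "v \<in> S" "\<And>s. s \<in> S \<Longrightarrow> s \<le> u \<or> v \<le> s" "u \<le> v"
  shows "(v - u) ^ 3 / 12 \<le> integral {u..v} (min_sq_dist S)"
proof -
  have "integral {u..v} (min_sq_dist {u, v}) \<le> integral {u..v} (min_sq_dist S)"
    using assms by (intro integral_min_sq_dist_le_if_closer) (auto dest: assms(4))
  moreover have "integral {u..v} (min_sq_dist {u, v}) = (v - u) ^ 3 / 12"
    using has_integral_min_sq_dist_pair[of u v u v] assms(5) by (simp add: integral_unique)
  ultimately show ?thesis by simp
qed

lemma integral_min_sq_dist_ge_of_right_end_and_point: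
  assumes "finite S" "p \<in> S" "v \<in> S" "\<And>s. s \<in> S \<Longrightarrow> s = p \<or> v \<le> s" "u < v"
  shows "(v - u) ^ 3 / 27 \<le> integral {u..v} (min_sq_dist S)"
    and "integral {u..v} (min_sq_dist S) = (v - u) ^ 3 / 27 \<Longrightarrow> p = (2 * u + v) / 3"
proof -
  define p' where "p' = max u (min p v)"
  have p': "u \<le> p'" "p' \<le> v" using assms(5) unfolding p'_def by auto
  have "integral {u..v} (min_sq_dist {p', v}) \<le> integral {u..v} (min_sq_dist S)"
    using assms unfolding p'_def by (intro integral_min_sq_dist_le_if_closer) (auto dest: assms(4))
  moreover have "integral {u..v} (min_sq_dist {p', v}) = (p' - u) ^ 3 / 3 + (v - p') ^ 3 / 12"
    using has_integral_min_sq_dist_pair[of p' v u v] p' by (simp add: integral_unique)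
  ultimately have le: "(p' - u) ^ 3 / 3 + (v - p') ^ 3 / 12 \<le> integral {u..v} (min_sq_dist S)"
    by simp
  show "(v - u) ^ 3 / 27 \<le> integral {u..v} (min_sq_dist S)"
    using cube_sum_ge(1)[of "p' - u" "v - p'"] le p' by simp
  assume "integral {u..v} (min_sq_dist S) = (v - u) ^ 3 / 27"
  then have "(p' - u) ^ 3 / 3 + (v - p') ^ 3 / 12 = (v - u) ^ 3 / 27"
    using cube_sum_ge(1)[of "p' - u" "v - p'"] le p' by simp
  then have "p' = (2 * u + v) / 3"
    using cube_sum_ge(2)[of "p' - u" "v - p'"] p' by simp
  then show "p = (2 * u + v) / 3" using assms(5) unfolding p'_def by auto
qed

lemma integral_min_sq_dist_ge_of_left_end_and_point:
  assumes "finite S" "q \<in> S" "u \<in> S" "\<And>s. s \<in> S \<Longrightarrow> s = q \<or> s \<le> u" "u < v"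
  shows "(v - u) ^ 3 / 27 \<le> integral {u..v} (min_sq_dist S)"
    and "integral {u..v} (min_sq_dist S) = (v - u) ^ 3 / 27 \<Longrightarrow> q = (u + 2 * v) / 3"
proof -
  define q' where "q' = max u (min q v)"
  have q': "u \<le> q'" "q' \<le> v" using assms(5) unfolding q'_def by auto
  have "integral {u..v} (min_sq_dist {u, q'}) \<le> integral {u..v} (min_sq_dist S)"
    using assms unfolding q'_def by (intro integral_min_sq_dist_le_if_closer) (auto dest: assms(4))
  moreover have "integral {u..v} (min_sq_dist {u, q'}) = (q' - u) ^ 3 / 12 + (v - q') ^ 3 / 3"
    using has_integral_min_sq_dist_pair[of u q' u v] q' by (simp add: integral_unique)
  ultimately have le: "(v - q') ^ 3 / 3 + (q' - u) ^ 3 / 12 \<le> integral {u..v} (min_sq_dist S)"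
    by simp
  show "(v - u) ^ 3 / 27 \<le> integral {u..v} (min_sq_dist S)"
    using cube_sum_ge(1)[of "v - q'" "q' - u"] le q' by simp
  assume "integral {u..v} (min_sq_dist S) = (v - u) ^ 3 / 27"
  then have "(v - q') ^ 3 / 3 + (q' - u) ^ 3 / 12 = (v - u) ^ 3 / 27"
    using cube_sum_ge(1)[of "v - q'" "q' - u"] le q' by simp
  then have "q' = (u + 2 * v) / 3"
    using cube_sum_ge(2)[of "v - q'" "q' - u"] q' by simp
  then show "q = (u + 2 * v) / 3" using assms(5) unfolding q'_def by auto
qed

lemma integral_min_sq_dist_le_of_pair:
  assumes "finite S" "p \<in> S" "q \<in> S" "p \<le> q" "u \<le> (p + q) / 2" "(p + q) / 2 \<le> v"
  shows "integral {u..v} (min_sq_dist S) \<le> (p - u) ^ 3 / 3 + (q - p) ^ 3 / 12 + (v - q) ^ 3 / 3"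
proof -
  have "integral {u..v} (min_sq_dist S) \<le> integral {u..v} (min_sq_dist {p, q})"
    using assms by (intro integral_le integrable_min_sq_dist min_sq_dist_antimono) auto
  also have "\<dots> = (p - u) ^ 3 / 3 + (q - p) ^ 3 / 12 + (v - q) ^ 3 / 3"
    using has_integral_min_sq_dist_pair[OF assms(4-6)] by (rule integral_unique)
  finally show ?thesis .
qed

lemma integral_combine_three:
  fixes f :: "real \<Rightarrow> real"
  assumes "f integrable_on {u..v}" "u \<le> w" "w \<le> w'" "w' \<le> v"
  shows "integral {u..v} f = integral {u..w} f + integral {w..w'} f + integral {w'..v} f"
proof -
  have "f integrable_on {u..w'}"
    using assms by (auto intro: integrable_on_subinterval)
  then show ?thesis
    using assms by (simp add: Henstock_Kurzweil_Integration.integral_combine)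
qed

lemma integral_min_sq_dist_quarter_half_split:
  "integral {0..1} (min_sq_dist {a, b, 1/4, 1/2}) =
     integral {0..1/4} (min_sq_dist {a, b, 1/4, 1/2}) + integral {1/4..1/2} (min_sq_dist {a, b, 1/4, 1/2})
     + integral {1/2..1} (min_sq_dist {a, b, 1/4, 1/2})"
  by (intro integral_combine_three integrable_min_sq_dist) auto

lemma integral_min_sq_dist_quarter_half_gt:
  fixes a b :: real
  assumes "a \<le> b" "\<not> (a < 1/4 \<and> 1/2 < b)"
  defines "S \<equiv> {a, b, 1/4, 1/2}"
  shows "5/768 < integral {0..1} (min_sq_dist S)"
proof -
  have S: "finite S" "S \<noteq> {}" and in_S: "a \<in> S" "b \<in> S" "1/4 \<in> S" "1/2 \<in> S"
    unfolding S_def by auto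
  have nonneg: "0 \<le> integral {u..v} (min_sq_dist S)" for u v
    using S by (intro integral_nonneg integrable_min_sq_dist min_sq_dist_nonneg)
  note split = integral_min_sq_dist_quarter_half_split[of a b, folded S_def]
  consider "b \<le> 1/2" | "1/2 < a" | "1/4 \<le> a" "a \<le> 1/2" "1/2 < b"
    using assms(1,2) by linarith
  then show ?thesis
  proof cases
    case 1
    then have "s \<le> 1/2" if "s \<in> S" for s using that assms(1) unfolding S_def by auto
    from integral_min_sq_dist_ge_of_left_end[OF S(1) in_S(4) this, of 1]
    show ?thesis using split nonneg[of 0 "1/4"] nonneg[of "1/4" "1/2"] by (simp add: power_divide)
  next
    case 2
    \<comment> \<open>The first two pieces alone already cost 1/192 + 1/768 = 5/768.\<close>
    then have "1/4 \<le> s" "s \<le> 1/4 \<or> 1/2 \<le> s" if "s \<in> S" for s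
      using that assms(1) unfolding S_def by auto
    with integral_min_sq_dist_ge_of_right_end[OF S(1) in_S(3), of 0]
      integral_min_sq_dist_ge_of_ends[OF S(1) in_S(3,4)]
      integral_min_sq_dist_pos[OF S, of "1/2" 1]
    show ?thesis using split by (simp add: power_divide)
  next
    case 3
    then have "1/4 \<le> s" "s = b \<or> s \<le> 1/2" if "s \<in> S" for s
      using that unfolding S_def by auto
    with integral_min_sq_dist_ge_of_right_end[OF S(1) in_S(3), of 0]
      integral_min_sq_dist_ge_of_left_end_and_point(1)[OF S(1) in_S(2,4), of 1]
    show ?thesis using split nonneg[of "1/4" "1/2"] by (simp add: power_divide)
  qed
qed

lemma integral_min_sq_dist_quarter_half_apart:
  fixes a b :: real
  assumes "a < 1/4" "1/2 < b"
  defines "S \<equiv> {a, b, 1/4, 1/2}"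
  shows "5/768 \<le> integral {0..1} (min_sq_dist S)"
    and "integral {0..1} (min_sq_dist S) = 5/768 \<Longrightarrow> a = 1/12 \<and> b = 5/6"
proof -
  have S: "finite S" and in_S: "a \<in> S" "b \<in> S" "1/4 \<in> S" "1/2 \<in> S"
    unfolding S_def by auto
  have "s = a \<or> 1/4 \<le> s" "s \<le> 1/4 \<or> 1/2 \<le> s" "s = b \<or> s \<le> 1/2" if "s \<in> S" for s
    using that assms(1,2) unfolding S_def by auto
  note left = integral_min_sq_dist_ge_of_right_end_and_point[OF S in_S(1,3) this(1), of 0]
    and middle = integral_min_sq_dist_ge_of_ends[OF S in_S(3,4) this(2)]
    and right = integral_min_sq_dist_ge_of_left_end_and_point[OF S in_S(2,4) this(3), of 1]
  note split = integral_min_sq_dist_quarter_half_split[of a b, folded S_def]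
  show "5/768 \<le> integral {0..1} (min_sq_dist S)"
    using left(1) middle right(1) split by (simp add: power_divide)
  assume "integral {0..1} (min_sq_dist S) = 5/768"
  then show "a = 1/12 \<and> b = 5/6"
    using left middle right split by (simp add: power_divide)
qed

lemma integral_min_sq_dist_quarter_half:
  fixes a b :: real
  shows "5/768 \<le> integral {0..1} (min_sq_dist {a, b, 1/4, 1/2})"
    and "integral {0..1} (min_sq_dist {a, b, 1/4, 1/2}) = 5/768 \<Longrightarrow> {a, b} = {1/12, 5/6}"
proof -
  have ordered: "5/768 \<le> integral {0..1} (min_sq_dist {a, b, 1/4, 1/2}) \<and>
      (integral {0..1} (min_sq_dist {a, b, 1/4, 1/2}) = 5/768 \<longrightarrow> {a, b} = {1/12, 5/6})"
    if "a \<le> b" for a b :: real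
    using integral_min_sq_dist_quarter_half_gt[OF that] integral_min_sq_dist_quarter_half_apart
    by (cases "a < 1/4 \<and> 1/2 < b") force+
  have "{a, b, 1/4, 1/2} = {b, a, 1/4, 1/2::real}" by auto
  then show "5/768 \<le> integral {0..1} (min_sq_dist {a, b, 1/4, 1/2})"
    and "integral {0..1} (min_sq_dist {a, b, 1/4, 1/2}) = 5/768 \<Longrightarrow> {a, b} = {1/12, 5/6}"
    using ordered[of a b] ordered[of b a] by (cases "a \<le> b"; auto)+
qed

lemma integral_min_sq_dist_optimal: "integral {0..1} (min_sq_dist {1/12, 1/4, 1/2, 5/6}) = 5/768"
proof -
  let ?S = "{1/12, 1/4, 1/2, 5/6::real}"
  have "integral {0..1/4} (min_sq_dist ?S) \<le> 1/1728"
    using integral_min_sq_dist_le_of_pair[of ?S "1/12" "1/4" 0 "1/4"] by (simp add: power_divide)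
  moreover have "integral {1/4..1/2} (min_sq_dist ?S) \<le> 1/768"
    using integral_min_sq_dist_le_of_pair[of ?S "1/4" "1/2" "1/4" "1/2"] by (simp add: power_divide)
  moreover have "integral {1/2..1} (min_sq_dist ?S) \<le> 1/216"
    using integral_min_sq_dist_le_of_pair[of ?S "1/2" "5/6" "1/2" 1] by (simp add: power_divide)
  moreover have "5/768 \<le> integral {0..1} (min_sq_dist ?S)"
    using integral_min_sq_dist_quarter_half(1)[of "1/12" "5/6"] by (simp add: insert_commute)
  ultimately show ?thesis
    using integral_min_sq_dist_quarter_half_split[of "1/12" "5/6"] by (simp add: insert_commute)
qed

lemma card_le_2_union_eq_pair:
  assumes "finite \<alpha>" "card \<alpha> \<le> 2" "c \<in> \<beta>"
  obtains a b where "\<alpha> \<union> \<beta> = {a, b} \<union> \<beta>"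
proof -
  consider "card \<alpha> = 0" | "card \<alpha> = 1" | "card \<alpha> = 2" using assms(2) by linarith
  then show thesis
  proof cases
    case 1
    then have "\<alpha> \<union> \<beta> = {c, c} \<union> \<beta>" using assms(1,3) by (simp add: insert_absorb)
    then show thesis by (rule that)
  next
    case 2
    then obtain x where "\<alpha> = {x, x}" by (auto simp: card_1_singleton_iff)
    then show thesis using that by blast
  next
    case 3
    then obtain x y where "\<alpha> = {x, y}" by (auto simp: card_2_iff)
    then show thesis using that by blast
  qed
qed

lemma cond_error_eqI:
  assumes "finite \<alpha>\<^sub>0" "card \<alpha>\<^sub>0 \<le> n - card \<beta>" "distortion P (\<alpha>\<^sub>0 \<union> \<beta>) = e"
    and "\<And>\<alpha>. finite \<alpha> \<Longrightarrow> card \<alpha> \<le> n - card \<beta> \<Longrightarrow> e \<le> distortion P (\<alpha> \<union> \<beta>)"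
  shows "cond_error P \<beta> n = e"
  unfolding cond_error_def
proof (rule cInf_eq_minimum)
  show "e \<in> {distortion P (\<alpha> \<union> \<beta>) |\<alpha>. finite \<alpha> \<and> card \<alpha> \<le> n - card \<beta>}"
    using assms(1-3) by blast
qed (use assms(4) in blast)

lemma distortion_quarter_half_ge:
  fixes \<alpha> :: "real set"
  assumes "finite \<alpha>" "card \<alpha> \<le> 2"
  defines "P \<equiv> uniform_measure lborel {0..1::real}"
  shows "5/768 \<le> distortion P (\<alpha> \<union> {1/4, 1/2})"
    and "distortion P (\<alpha> \<union> {1/4, 1/2}) = 5/768 \<Longrightarrow> \<alpha> \<union> {1/4, 1/2} = {1/12, 1/4, 1/2, 5/6}"
proof -
  obtain a b where "\<alpha> \<union> {1/4, 1/2} = {a, b} \<union> {1/4, 1/2::real}"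
    using card_le_2_union_eq_pair[OF assms(1,2) insertI1] by blast
  then have ab: "\<alpha> \<union> {1/4, 1/2} = {a, b, 1/4, 1/2}" by auto
  have distortion: "distortion P (\<alpha> \<union> {1/4, 1/2}) = integral {0..1} (min_sq_dist {a, b, 1/4, 1/2})"
    unfolding ab P_def by (simp add: distortion_uniform_measure)
  show "5/768 \<le> distortion P (\<alpha> \<union> {1/4, 1/2})"
    unfolding distortion by (rule integral_min_sq_dist_quarter_half(1))
  assume "distortion P (\<alpha> \<union> {1/4, 1/2}) = 5/768"
  then have "{a, b} = {1/12, 5/6}"
    unfolding distortion by (rule integral_min_sq_dist_quarter_half(2))
  then show "\<alpha> \<union> {1/4, 1/2} = {1/12, 1/4, 1/2, 5/6}" unfolding ab by auto
qed

lemma distortion_quarter_half_optimal: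
  "distortion (uniform_measure lborel {0..1}) {1/12, 1/4, 1/2, 5/6} = 5/768"
  by (simp add: distortion_uniform_measure integral_min_sq_dist_optimal)

lemma voronoi_optimal_quarter: "voronoi {1/12, 1/4, 1/2, 5/6} (1/4) = {1/6..3/8::real}"
  unfolding voronoi_def by (auto simp: abs_real_def split: if_splits)

lemma voronoi_optimal_half: "voronoi {1/12, 1/4, 1/2, 5/6} (1/2) = {3/8..2/3::real}"
  unfolding voronoi_def by (auto simp: abs_real_def split: if_splits)

theorem proposition3p3:
  defines "P \<equiv> uniform_measure lborel {0..1::real}"
      and "\<beta> \<equiv> {1/4, 1/2::real}"
  shows "(\<forall>S. cond_optimal P \<beta> 4 S \<longleftrightarrow> S = {1/12, 1/4, 1/2, 5/6})
         \<and> cond_error P \<beta> 4 = 5/768"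
proof -
  let ?opt = "{1/12, 1/4, 1/2, 5/6::real}"
  have card_\<beta>: "4 - card \<beta> = 2" unfolding \<beta>_def by simp
  have optimal: "{1/12, 5/6} \<union> \<beta> = ?opt" unfolding \<beta>_def by auto
  note lower = distortion_quarter_half_ge[folded P_def \<beta>_def]
  have optimal_value: "distortion P ?opt = 5/768"
    unfolding P_def by (rule distortion_quarter_half_optimal)
  have error: "cond_error P \<beta> 4 = 5/768"
    using optimal optimal_value lower(1)
    by (intro cond_error_eqI[of "{1/12, 5/6}"]) (simp_all add: card_\<beta>)
  have voronoi: "\<forall>b\<in>\<beta>. 0 < measure P (voronoi ?opt b)"
    unfolding \<beta>_def P_def by (simp add: voronoi_optimal_quarter voronoi_optimal_half)
  have "cond_optimal P \<beta> 4 S \<longleftrightarrow> S = ?opt" for S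
  proof
    assume "cond_optimal P \<beta> 4 S"
    then obtain \<alpha> where "finite \<alpha>" "card \<alpha> \<le> 2" "S = \<alpha> \<union> \<beta>" "distortion P S = 5/768"
      unfolding cond_optimal_def card_\<beta> error by blast
    then show "S = ?opt" using lower(2) by blast
  next
    assume "S = ?opt"
    then show "cond_optimal P \<beta> 4 S"
      unfolding cond_optimal_def card_\<beta> error using voronoi optimal optimal_value
      by (intro exI[of _ "{1/12, 5/6}"]) (simp add: card_insert_if)
  qed
  then show ?thesis using error by blast
qed

end
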